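(* For every prime power $q$, all integers $n$, $r\le\lfloor n/2\rfloor$ and $0<\rho<r$, $$K_{\mathrm{C}}(q,n,r,\rho)\le K_{\mathrm{C}}(q,n-1,r,\rho-1)\le {n-\rho\brack r} \quad\text{and}\quad K_{\mathrm{C}}(q,n,r,\rho)\le K_{\mathrm{C}}(q,n,r-1,\rho-1)\le {n\brack r-\rho}.$$
   Context: ${m\brack k}=\prod_{i=0}^{k-1}\frac{q^m-q^i}{q^k-q^i}$ is the Gaussian binomial (the number of $k$-dimensional subspaces of $\mathrm{GF}(q)^m$). $E_r(q,n)$ is the set of $r$-dimensional subspaces of $\mathrm{GF}(q)^n$ with injection distance $d_{\mathrm{I}}(U,V)=\dim(U+V)-\min\{\dim U,\dim V\}$; the covering radius of a nonempty $\mathcal{C}\subseteq E_r(q,n)$ is $\max_U\min_{C\in\mathcal{C}}d_{\mathrm{I}}(U,C)$, and $K_{\mathrm{C}}(q,n,r,\rho)$ is the minimum cardinality of a subset of $E_r(q,n)$ with covering radius at most $\rho$ (for any $0\le r\le n$, $\rho\ge 0$). *)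

theory Defs
  imports Complex_Main "HOL-Library.Function_Algebras" "HOL-Library.Set_Algebras"
begin

text \<open>Vectors of GF(q)^n are represented as functions nat => 'a (finite field 'a, q = CARD('a))
  vanishing outside {0..<n}; the ambient vector space is the space of all nat => 'a with
  pointwise operations.\<close>

definition fscale :: "'a::field \<Rightarrow> (nat \<Rightarrow> 'a) \<Rightarrow> (nat \<Rightarrow> 'a)" where
  "fscale c v = (\<lambda>i. c * v i)"

interpretation fv: vector_space "fscale :: 'a::field \<Rightarrow> (nat \<Rightarrow> 'a) \<Rightarrow> (nat \<Rightarrow> 'a)"
  by unfold_locales (auto simp: fscale_def fun_eq_iff algebra_simps)

definition ambient :: "nat \<Rightarrow> (nat \<Rightarrow> 'a::field) set" where
  "ambient n = {v. \<forall>i\<ge>n. v i = 0}"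

definition Er :: "nat \<Rightarrow> nat \<Rightarrow> (nat \<Rightarrow> 'a::{field,finite}) set set" where
  "Er n r = {U. fv.subspace U \<and> U \<subseteq> ambient n \<and> fv.dim U = r}"

definition dI :: "(nat \<Rightarrow> 'a::field) set \<Rightarrow> (nat \<Rightarrow> 'a) set \<Rightarrow> nat" where
  "dI U V = fv.dim (U + V) - min (fv.dim U) (fv.dim V)"

definition cov_radius :: "nat \<Rightarrow> nat \<Rightarrow> (nat \<Rightarrow> 'a::{field,finite}) set set \<Rightarrow> nat" where
  "cov_radius n r C = Max ((\<lambda>U. Min ((\<lambda>D. dI U D) ` C)) ` Er n r)"

text \<open>K_C(q,n,r,rho) with q = CARD('a); the type argument fixes the field.\<close>
definition KC :: "'a::{field,finite} itself \<Rightarrow> nat \<Rightarrow> nat \<Rightarrow> nat \<Rightarrow> nat" where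
  "KC _ n r \<rho> = (LEAST k. \<exists>C::(nat \<Rightarrow> 'a) set set. C \<subseteq> Er n r \<and> C \<noteq> {} \<and> card C = k
                                \<and> cov_radius n r C \<le> \<rho>)"

definition gauss_binom :: "nat \<Rightarrow> nat \<Rightarrow> nat \<Rightarrow> real" where
  "gauss_binom q m k = (\<Prod>i<k. (real q ^ m - real q ^ i) / (real q ^ k - real q ^ i))"

end

theory Submission
  imports Defs "HOL-Library.FuncSet"
begin

(* A code C in E_r(q,M) of covering radius rho also covers E_r(q,N), M <= N, with radius
   rho + (N - M): every U in E_r(q,N) meets GF(q)^M in dimension at least r - (N - M), so some
   W in E_r(q,M) has d_I(U,W) <= N - M, and d_I satisfies the triangle inequality.  Dually,
   replacing each codeword of a code in E_k(q,n) of radius rho by an r-dimensional superspace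
   gives a code in E_r(q,n) of radius rho + (r - k), because every r-subspace contains a
   k-subspace.  Applied to optimal codes this gives the two comparisons of K_C; applied to the
   radius-0 codes E_r(q,n-rho) and E_(r-rho)(q,n) it gives the Gaussian binomial bounds, since
   |E_r(q,m)| <= [m brack r]_q by counting ordered bases.  The dimension arithmetic rests on
   |U + V| |U /\ V| = |U| |V| and |U| = q^(dim U). *)

lemma card_UNIV_field_ge_2: "2 \<le> card (UNIV :: 'a::{field,finite} set)"
proof -
  have "card {0::'a, 1} \<le> card (UNIV::'a set)" by (rule card_mono) simp_all
  then show ?thesis by simp
qed

lemma card_span_independent:
  fixes B :: "(nat \<Rightarrow> 'a::{field,finite}) set"
  assumes "finite B" "fv.independent B"
  shows "finite (fv.span B) \<and> card (fv.span B) = card (UNIV::'a set) ^ card B"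
  using assms
proof (induction B rule: finite_induct)
  case empty
  then show ?case by (simp add: fv.span_empty)
next
  case (insert x B)
  have ind: "fv.independent B" and nx: "x \<notin> fv.span B"
    using insert.prems insert.hyps by (auto simp: fv.independent_insert)
  note IH = insert.IH[OF ind]
  let ?f = "\<lambda>(c, y). fscale c x + y"
  have span_eq: "fv.span (insert x B) = ?f ` (UNIV \<times> fv.span B)"
  proof (intro equalityI subsetI)
    fix z assume "z \<in> fv.span (insert x B)"
    then obtain k where "z - fscale k x \<in> fv.span B" by (auto simp: fv.span_insert)
    moreover have "z = ?f (k, z - fscale k x)" by simp
    ultimately show "z \<in> ?f ` (UNIV \<times> fv.span B)" by blast
  next
    fix z assume "z \<in> ?f ` (UNIV \<times> fv.span B)"
    then show "z \<in> fv.span (insert x B)"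
      by (auto intro!: fv.span_add fv.span_scale intro: fv.span_base
          fv.span_mono[THEN subsetD, OF subset_insertI])
  qed
  have "inj_on ?f (UNIV \<times> fv.span B)"
  proof (rule inj_onI, clarify)
    fix c y c' y' assume y: "y \<in> fv.span B" "y' \<in> fv.span B"
      and e: "fscale c x + y = fscale c' x + y'"
    show "c = c' \<and> y = y'"
    proof (cases "c = c'")
      case True then show ?thesis using e by simp
    next
      case False
      have "fscale (c - c') x = y' - y" using e
        by (simp add: fun_eq_iff algebra_simps fscale_def)
      then have "fscale (inverse (c - c')) (fscale (c - c') x) \<in> fv.span B"
        using y by (simp add: fv.span_diff fv.span_scale)
      then have "x \<in> fv.span B" using False by simp
      with nx show ?thesis by simp
    qed
  qed
  then have "card (fv.span (insert x B)) = card (UNIV::'a set) * card (fv.span B)"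
    using card_image[OF \<open>inj_on ?f _\<close>] span_eq IH by (simp add: card_cartesian_product)
  then show ?case using IH span_eq insert.hyps by simp
qed

lemma subspace_obtain_basis:
  fixes X :: "(nat \<Rightarrow> 'a::field) set"
  assumes "fv.subspace X" "finite X"
  obtains B where "B \<subseteq> X" "finite B" "fv.independent B" "fv.span B = X" "card B = fv.dim X"
proof -
  obtain B where B: "B \<subseteq> X" "fv.independent B" "X \<subseteq> fv.span B" "card B = fv.dim X"
    by (rule fv.basis_exists)
  have "fv.span B = X" using B assms by (meson fv.span_minimal subset_antisym)
  then show ?thesis using that B assms finite_subset by blast
qed

lemma card_subspace:
  fixes X :: "(nat \<Rightarrow> 'a::{field,finite}) set"
  assumes "fv.subspace X" "finite X"
  shows "card X = card (UNIV::'a set) ^ fv.dim X"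
  using card_span_independent by (metis subspace_obtain_basis[OF assms])

lemma dim_subset_finite:
  fixes X Y :: "(nat \<Rightarrow> 'a::{field,finite}) set"
  assumes "fv.subspace Y" "finite Y" "X \<subseteq> Y"
  shows "fv.dim X \<le> fv.dim Y"
proof -
  obtain B where "finite B" "fv.span B = Y" "card B = fv.dim Y"
    by (rule subspace_obtain_basis[OF assms(1,2)])
  then show ?thesis using fv.dim_le_card[of X B] assms(3) by simp
qed

lemma power_card_UNIV_field_inject:
  "card (UNIV::'a::{field,finite} set) ^ a = card (UNIV::'a set) ^ b \<Longrightarrow> a = b"
  using card_UNIV_field_ge_2[where 'a='a] by (simp add: power_inject_exp)

lemma finite_ambient: "finite (ambient n :: (nat \<Rightarrow> 'a::{field,finite}) set)"
  and card_ambient: "card (ambient n :: (nat \<Rightarrow> 'a::{field,finite}) set) = card (UNIV::'a set) ^ n"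
proof -
  let ?ext = "\<lambda>f::nat \<Rightarrow> 'a. (\<lambda>i. if i < n then f i else 0)"
  have "ambient n = ?ext ` ({0..<n} \<rightarrow>\<^sub>E UNIV)"
  proof (intro equalityI subsetI)
    fix v :: "nat \<Rightarrow> 'a" assume "v \<in> ambient n"
    then have "v = ?ext (restrict v {0..<n})" by (auto simp: ambient_def fun_eq_iff)
    moreover have "restrict v {0..<n} \<in> {0..<n} \<rightarrow>\<^sub>E UNIV" by simp
    ultimately show "v \<in> ?ext ` ({0..<n} \<rightarrow>\<^sub>E UNIV)" by (rule image_eqI)
  qed (auto simp: ambient_def)
  moreover have "inj_on ?ext ({0..<n} \<rightarrow>\<^sub>E UNIV)"
    by (rule inj_onI, rule PiE_ext, assumption+) (metis atLeastLessThan_iff)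
  ultimately show "finite (ambient n :: (nat \<Rightarrow> 'a) set)"
    and "card (ambient n :: (nat \<Rightarrow> 'a) set) = card (UNIV::'a set) ^ n"
    by (simp_all add: finite_PiE card_image card_PiE)
qed

lemma subspace_ambient: "fv.subspace (ambient n :: (nat \<Rightarrow> 'a::field) set)"
  by (auto simp: fv.subspace_def ambient_def fscale_def)

lemma dim_ambient: "fv.dim (ambient n :: (nat \<Rightarrow> 'a::{field,finite}) set) = n"
  using card_subspace[OF subspace_ambient finite_ambient] card_ambient
  by (metis power_card_UNIV_field_inject)

lemma ambient_mono: "m \<le> n \<Longrightarrow> ambient m \<subseteq> ambient n"
  by (auto simp: ambient_def)

lemma subspace_set_plus:
  fixes U V :: "(nat \<Rightarrow> 'a::field) set"
  assumes "fv.subspace U" "fv.subspace V"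
  shows "fv.subspace (U + V)"
proof -
  have "U + V = {x + y|x y. x \<in> U \<and> y \<in> V}" by (auto simp: set_plus_def)
  then show ?thesis using fv.subspace_sums[OF assms] by simp
qed

lemma set_plus_ambient: "U \<subseteq> ambient n \<Longrightarrow> V \<subseteq> ambient n \<Longrightarrow> U + V \<subseteq> ambient n"
  by (force simp: set_plus_def ambient_def)

lemma card_set_plus_mult_card_inter:
  fixes U V :: "(nat \<Rightarrow> 'a::field) set"
  assumes U: "fv.subspace U" "finite U" and V: "fv.subspace V" "finite V"
  shows "card (U + V) * card (U \<inter> V) = card U * card V"
proof -
  define F where "F w = {p \<in> U \<times> V. fst p + snd p = w}" for w
  have UV: "U \<times> V = (\<Union>w\<in>U + V. F w)"
    unfolding F_def set_plus_def by auto blast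
  have card_fibre: "card (F w) = card (U \<inter> V)" if w_in: "w \<in> U + V" for w
  proof -
    obtain u0 v0 where u0: "u0 \<in> U" and v0: "v0 \<in> V" and w: "w = u0 + v0"
      using w_in by (auto elim: set_plus_elim)
    let ?h = "\<lambda>z. (u0 + z, v0 - z)"
    have "F w = ?h ` (U \<inter> V)"
    proof (intro equalityI subsetI)
      fix p assume p: "p \<in> F w"
      obtain a b where ab: "p = (a, b)" by (cases p)
      have a: "a \<in> U" and b: "b \<in> V" and e: "a + b = u0 + v0" using p ab w by (auto simp: F_def)
      have "a - u0 = v0 - b" using e by (simp add: algebra_simps)
      moreover have "a - u0 \<in> U" "v0 - b \<in> V" using a b u0 v0 U V by (simp_all add: fv.subspace_diff)
      moreover have "p = ?h (a - u0)" using ab \<open>a - u0 = v0 - b\<close> by (simp add: algebra_simps)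
      ultimately show "p \<in> ?h ` (U \<inter> V)" by auto
    next
      fix p assume "p \<in> ?h ` (U \<inter> V)"
      then show "p \<in> F w" using u0 v0 w U V by (auto simp: F_def fv.subspace_add fv.subspace_diff)
    qed
    moreover have "inj_on ?h (U \<inter> V)" by (rule inj_onI) simp
    ultimately show ?thesis by (simp add: card_image)
  qed
  have "card (U \<times> V) = (\<Sum>w\<in>U + V. card (F w))"
    unfolding UV using U V by (intro card_UN_disjoint) (auto simp: F_def finite_set_plus)
  also have "\<dots> = card (U + V) * card (U \<inter> V)" using card_fibre by simp
  finally show ?thesis by (simp add: card_cartesian_product)
qed

lemma dim_set_plus_inter:
  fixes U V :: "(nat \<Rightarrow> 'a::{field,finite}) set"
  assumes U: "fv.subspace U" "finite U" and V: "fv.subspace V" "finite V"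
  shows "fv.dim (U + V) + fv.dim (U \<inter> V) = fv.dim U + fv.dim V"
proof -
  have "fv.subspace (U + V)" "finite (U + V)" "fv.subspace (U \<inter> V)" "finite (U \<inter> V)"
    using U V by (simp_all add: subspace_set_plus finite_set_plus fv.subspace_inter)
  then have "card (UNIV::'a set) ^ (fv.dim (U + V) + fv.dim (U \<inter> V))
      = card (UNIV::'a set) ^ (fv.dim U + fv.dim V)"
    using card_set_plus_mult_card_inter[OF U V] U V by (simp add: card_subspace power_add)
  then show ?thesis by (rule power_card_UNIV_field_inject)
qed

lemma subspace_between:
  fixes X Y :: "(nat \<Rightarrow> 'a::{field,finite}) set"
  assumes X: "fv.subspace X" and Y: "fv.subspace Y" "finite Y" and "X \<subseteq> Y"
    and k: "fv.dim X \<le> k" "k \<le> fv.dim Y"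
  obtains Z where "fv.subspace Z" "X \<subseteq> Z" "Z \<subseteq> Y" "fv.dim Z = k"
proof -
  obtain BX where BX: "BX \<subseteq> X" "finite BX" "fv.independent BX" "fv.span BX = X" "card BX = fv.dim X"
    using subspace_obtain_basis[OF X] Y \<open>X \<subseteq> Y\<close> finite_subset by metis
  obtain BY where BY: "BX \<subseteq> BY" "BY \<subseteq> Y" "fv.independent BY" "Y \<subseteq> fv.span BY"
    using fv.maximal_independent_subset_extend[of BX Y] BX \<open>X \<subseteq> Y\<close> by blast
  have "finite BY" using BY Y finite_subset by blast
  have "fv.span BY = Y" using BY Y by (meson fv.span_minimal subset_antisym)
  then have "card BY = fv.dim Y" using fv.dim_span_eq_card_independent[OF BY(3)] by simp
  then have "k - card BX \<le> card (BY - BX)" using BX BY(1) k \<open>finite BY\<close> by (simp add: card_Diff_subset)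
  then obtain T where T: "T \<subseteq> BY - BX" "card T = k - card BX"
    using obtain_subset_with_card_n by metis
  have "finite T" using T \<open>finite BY\<close> finite_subset by blast
  then have card_S: "card (BX \<union> T) = k" using T BX k by (subst card_Un_disjoint) auto
  have "fv.independent (BX \<union> T)" using fv.independent_mono[OF BY(3)] T BY by blast
  show ?thesis
  proof (rule that[of "fv.span (BX \<union> T)"])
    show "X \<subseteq> fv.span (BX \<union> T)" using BX fv.span_mono[of BX "BX \<union> T"] by auto
    show "fv.span (BX \<union> T) \<subseteq> Y" using BY T Y by (intro fv.span_minimal) auto
    show "fv.dim (fv.span (BX \<union> T)) = k"
      using fv.dim_span_eq_card_independent[OF \<open>fv.independent (BX \<union> T)\<close>] card_S by simp
  qed simp
qed

lemma Er_D:
  fixes U :: "(nat \<Rightarrow> 'a::{field,finite}) set"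
  assumes "U \<in> Er n r"
  shows "fv.subspace U" "finite U" "U \<subseteq> ambient n" "fv.dim U = r"
  using assms finite_subset[OF _ finite_ambient] by (auto simp: Er_def)

lemma finite_Er: "finite (Er n r :: (nat \<Rightarrow> 'a::{field,finite}) set set)"
  by (rule finite_subset[of _ "Pow (ambient n)"]) (auto simp: Er_def finite_ambient)

lemma Er_mono: "m \<le> n \<Longrightarrow> Er m r \<subseteq> Er n r"
  using ambient_mono by (auto simp: Er_def)

lemma ambient_in_Er: "r \<le> n \<Longrightarrow> (ambient r :: (nat \<Rightarrow> 'a::{field,finite}) set) \<in> Er n r"
  by (simp add: Er_def subspace_ambient ambient_mono dim_ambient)

lemma Er_obtain_subspace:
  fixes U :: "(nat \<Rightarrow> 'a::{field,finite}) set"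
  assumes "U \<in> Er n r" "k \<le> r"
  obtains W where "W \<in> Er n k" "W \<subseteq> U"
proof -
  note U = Er_D[OF assms(1)]
  have "fv.dim (fv.span {} :: (nat \<Rightarrow> 'a) set) = 0"
    using fv.dim_span_eq_card_independent[OF fv.independent_empty] by simp
  moreover have "fv.span {} \<subseteq> U" using U(1) fv.span_minimal[of "{}" U] by blast
  ultimately obtain W where "fv.subspace W" "W \<subseteq> U" "fv.dim W = k"
    using subspace_between[OF fv.subspace_span U(1,2)] U(4) assms(2) by (metis le0)
  then show ?thesis using that U(3) by (auto simp: Er_def)
qed

lemma Er_obtain_superspace:
  fixes U :: "(nat \<Rightarrow> 'a::{field,finite}) set"
  assumes "U \<in> Er n r" "r \<le> k" "k \<le> n"
  obtains W where "W \<in> Er n k" "U \<subseteq> W"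
proof -
  note U = Er_D[OF assms(1)]
  obtain W where "fv.subspace W" "U \<subseteq> W" "W \<subseteq> ambient n" "fv.dim W = k"
    using subspace_between[OF U(1) subspace_ambient finite_ambient U(3)] dim_ambient U(4) assms(2,3)
    by metis
  then show ?thesis using that by (auto simp: Er_def)
qed

definition indep_lists :: "nat \<Rightarrow> (nat \<Rightarrow> 'a::field) set \<Rightarrow> (nat \<Rightarrow> 'a) list set" where
  "indep_lists k X = {xs. length xs = k \<and> distinct xs \<and> set xs \<subseteq> X \<and> fv.independent (set xs)}"

lemma indep_lists_Suc:
  "indep_lists (Suc k) X
     = (\<lambda>(xs, x). xs @ [x]) ` (SIGMA xs:indep_lists k X. X - fv.span (set xs))"
proof (intro equalityI subsetI)
  fix ys assume ys: "ys \<in> indep_lists (Suc k) X"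
  then have "ys \<noteq> []" by (auto simp: indep_lists_def)
  then have ys_eq: "ys = butlast ys @ [last ys]" by simp
  have "set ys = set (butlast ys @ [last ys])" using ys_eq by (rule arg_cong)
  then have "set ys = insert (last ys) (set (butlast ys))" by simp
  with ys ys_eq have "distinct (butlast ys @ [last ys])" "set (butlast ys @ [last ys]) \<subseteq> X"
    "fv.independent (insert (last ys) (set (butlast ys)))" "length ys = Suc k"
    by (auto simp: indep_lists_def)
  then have "butlast ys \<in> indep_lists k X" "last ys \<in> X - fv.span (set (butlast ys))"
    by (auto simp: indep_lists_def fv.independent_insert)
  then show "ys \<in> (\<lambda>(xs, x). xs @ [x]) ` (SIGMA xs:indep_lists k X. X - fv.span (set xs))"
    using ys_eq by force
next
  fix ys assume "ys \<in> (\<lambda>(xs, x). xs @ [x]) ` (SIGMA xs:indep_lists k X. X - fv.span (set xs))"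
  then obtain xs x where "ys = xs @ [x]" "xs \<in> indep_lists k X" "x \<in> X" "x \<notin> fv.span (set xs)"
    by auto
  moreover have "x \<notin> set xs" using \<open>x \<notin> fv.span (set xs)\<close> fv.span_superset by blast
  ultimately show "ys \<in> indep_lists (Suc k) X"
    by (auto simp: indep_lists_def fv.independent_insert)
qed

lemma card_indep_lists:
  fixes X :: "(nat \<Rightarrow> 'a::{field,finite}) set"
  assumes X: "fv.subspace X" "finite X"
  shows "finite (indep_lists k X) \<and> card (indep_lists k X) = (\<Prod>i<k. card X - card (UNIV::'a set) ^ i)"
proof (induction k)
  case 0
  have "indep_lists 0 X = {[]}" by (auto simp: indep_lists_def fv.independent_empty)
  then show ?case by simp
next
  case (Suc k)
  let ?S = "SIGMA xs:indep_lists k X. X - fv.span (set xs)"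
  have card_compl: "card (X - fv.span (set xs)) = card X - card (UNIV::'a set) ^ k"
    if "xs \<in> indep_lists k X" for xs
  proof -
    have xs: "length xs = k" "distinct xs" "set xs \<subseteq> X" "fv.independent (set xs)"
      using that by (auto simp: indep_lists_def)
    have "fv.span (set xs) \<subseteq> X" using xs X fv.span_minimal by blast
    moreover have "card (fv.span (set xs)) = card (UNIV::'a set) ^ k"
      using card_span_independent[of "set xs"] xs by (simp add: distinct_card)
    ultimately show ?thesis using X by (simp add: card_Diff_subset finite_subset)
  qed
  have "inj_on (\<lambda>(xs, x). xs @ [x]) ?S" by (rule inj_onI) auto
  then have "card (indep_lists (Suc k) X) = card ?S"
    unfolding indep_lists_Suc by (rule card_image)
  also have "\<dots> = (\<Sum>xs\<in>indep_lists k X. card (X - fv.span (set xs)))"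
    using Suc X by (simp add: card_SigmaI)
  also have "\<dots> = card (indep_lists k X) * (card X - card (UNIV::'a set) ^ k)"
    using card_compl by simp
  finally show ?case using Suc X unfolding indep_lists_Suc by (simp add: mult.commute)
qed

lemma span_indep_lists_Er:
  fixes U :: "(nat \<Rightarrow> 'a::{field,finite}) set"
  assumes U: "U \<in> Er m r" and xs: "xs \<in> indep_lists r U"
  shows "fv.span (set xs) = U"
proof -
  note U' = Er_D[OF U]
  have xs': "length xs = r" "distinct xs" "set xs \<subseteq> U" "fv.independent (set xs)"
    using xs by (auto simp: indep_lists_def)
  have "fv.span (set xs) \<subseteq> U" using xs' U' fv.span_minimal by blast
  moreover have "card (fv.span (set xs)) = card U"
    using card_span_independent[of "set xs"] xs' U' card_subspace[OF U'(1,2)]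
    by (simp add: distinct_card)
  ultimately show ?thesis using U' card_subset_eq by blast
qed

lemma card_Er_mult_le:
  "card (Er m r :: (nat \<Rightarrow> 'a::{field,finite}) set set)
     * (\<Prod>i<r. card (UNIV::'a set) ^ r - card (UNIV::'a set) ^ i)
   \<le> (\<Prod>i<r. card (UNIV::'a set) ^ m - card (UNIV::'a set) ^ i)"
proof -
  let ?E = "Er m r :: (nat \<Rightarrow> 'a) set set"
  have card_U: "card (indep_lists r U) = (\<Prod>i<r. card (UNIV::'a set) ^ r - card (UNIV::'a set) ^ i)"
    if U: "U \<in> ?E" for U
    using card_indep_lists[OF Er_D(1,2)[OF U]] card_subspace[OF Er_D(1,2)[OF U]] Er_D(4)[OF U]
    by simp
  have "card ?E * (\<Prod>i<r. card (UNIV::'a set) ^ r - card (UNIV::'a set) ^ i)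
      = (\<Sum>U\<in>?E. card (indep_lists r U))"
    by (simp add: card_U)
  also have "\<dots> = card (\<Union>U\<in>?E. indep_lists r U)"
  proof (rule card_UN_disjoint[OF finite_Er, symmetric])
    show "\<forall>U\<in>?E. finite (indep_lists r U)" using card_indep_lists[OF Er_D(1,2)] by blast
    show "\<forall>U\<in>?E. \<forall>V\<in>?E. U \<noteq> V \<longrightarrow> indep_lists r U \<inter> indep_lists r V = {}"
      using span_indep_lists_Er by blast
  qed
  also have "\<dots> \<le> card (indep_lists r (ambient m :: (nat \<Rightarrow> 'a) set))"
  proof (rule card_mono)
    show "finite (indep_lists r (ambient m :: (nat \<Rightarrow> 'a) set))"
      using card_indep_lists[OF subspace_ambient finite_ambient] by blast
    show "(\<Union>U\<in>?E. indep_lists r U) \<subseteq> indep_lists r (ambient m)"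
      using Er_D(3) by (fastforce simp: indep_lists_def)
  qed
  also have "\<dots> = (\<Prod>i<r. card (UNIV::'a set) ^ m - card (UNIV::'a set) ^ i)"
    using card_indep_lists[OF subspace_ambient finite_ambient, where 'a='a] card_ambient[where 'a='a]
    by simp
  finally show ?thesis .
qed

lemma card_Er_le_gauss_binom:
  assumes "r \<le> m"
  shows "real (card (Er m r :: (nat \<Rightarrow> 'a::{field,finite}) set set))
           \<le> gauss_binom (card (UNIV::'a set)) m r"
proof -
  let ?q = "card (UNIV::'a set)"
  have lt: "?q ^ i < ?q ^ k" if "i < k" for i k
    using card_UNIV_field_ge_2[where 'a='a] that by (simp add: power_strict_increasing)
  have real_prod: "real (\<Prod>i<r. ?q ^ k - ?q ^ i) = (\<Prod>i<r. real ?q ^ k - real ?q ^ i)"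
    if "r \<le> k" for k
    using lt that by (simp add: of_nat_diff less_imp_le)
  have "real (card (Er m r :: (nat \<Rightarrow> 'a) set set)) * (\<Prod>i<r. real ?q ^ r - real ?q ^ i)
      \<le> (\<Prod>i<r. real ?q ^ m - real ?q ^ i)"
  proof -
    have "real (card (Er m r :: (nat \<Rightarrow> 'a) set set) * (\<Prod>i<r. ?q ^ r - ?q ^ i))
        \<le> real (\<Prod>i<r. ?q ^ m - ?q ^ i)"
      using card_Er_mult_le by (simp only: of_nat_le_iff)
    then show ?thesis unfolding of_nat_mult real_prod[OF order_refl] real_prod[OF assms] .
  qed
  moreover have "0 < (\<Prod>i<r. real ?q ^ r - real ?q ^ i)"
    using lt by (intro prod_pos) (simp flip: of_nat_power)
  ultimately have "real (card (Er m r :: (nat \<Rightarrow> 'a) set set))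
      \<le> (\<Prod>i<r. real ?q ^ m - real ?q ^ i) / (\<Prod>i<r. real ?q ^ r - real ?q ^ i)"
    by (simp add: pos_le_divide_eq)
  then show ?thesis unfolding gauss_binom_def by (simp add: prod_dividef)
qed

lemma dI_Er:
  fixes U V :: "(nat \<Rightarrow> 'a::{field,finite}) set"
  assumes "U \<in> Er n r" "V \<in> Er n r"
  shows "dI U V = r - fv.dim (U \<inter> V)"
proof -
  note U = Er_D[OF assms(1)] and V = Er_D[OF assms(2)]
  have "fv.dim (U + V) + fv.dim (U \<inter> V) = r + r"
    using dim_set_plus_inter[OF U(1,2) V(1,2)] U V by simp
  then show ?thesis unfolding dI_def using U V by simp
qed

lemma dI_Er_self: "U \<in> Er n r \<Longrightarrow> dI U U = 0"
  using dI_Er[of U n r U] Er_D(4)[of U n r] by simp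

lemma dim_inter_Er_le: "U \<in> Er n r \<Longrightarrow> fv.dim (U \<inter> V) \<le> r"
  using Er_D[of U n r] dim_subset_finite[of U "U \<inter> V"] by auto

text \<open>The modular law applied inside \<open>W\<close> gives
  \<open>dim (U \<inter> W \<inter> D) \<ge> dim (U \<inter> W) + dim (W \<inter> D) - r\<close>.\<close>
lemma dI_Er_triangle:
  fixes U W D :: "(nat \<Rightarrow> 'a::{field,finite}) set"
  assumes U: "U \<in> Er n r" and W: "W \<in> Er n r" and D: "D \<in> Er n r"
  shows "dI U D \<le> dI U W + dI W D"
proof -
  note U' = Er_D[OF U] and W' = Er_D[OF W] and D' = Er_D[OF D]
  have UW: "fv.subspace (U \<inter> W)" "finite (U \<inter> W)" and WD: "fv.subspace (W \<inter> D)" "finite (W \<inter> D)"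
    using U' W' D' fv.subspace_inter by auto
  have "(U \<inter> W) + (W \<inter> D) \<subseteq> W" using W'(1) by (auto simp: set_plus_def fv.subspace_add)
  then have "fv.dim ((U \<inter> W) + (W \<inter> D)) \<le> r" using dim_subset_finite[OF W'(1,2)] W'(4) by simp
  then have "fv.dim (U \<inter> W) + fv.dim (W \<inter> D) \<le> r + fv.dim ((U \<inter> W) \<inter> (W \<inter> D))"
    using dim_set_plus_inter[OF UW WD] by linarith
  moreover have "fv.dim ((U \<inter> W) \<inter> (W \<inter> D)) \<le> fv.dim (U \<inter> D)"
    using U' D' by (intro dim_subset_finite) (auto intro: fv.subspace_inter)
  ultimately show ?thesis
    using dI_Er[OF U D] dI_Er[OF U W] dI_Er[OF W D] dim_inter_Er_le[OF U] dim_inter_Er_le[OF W]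
    by linarith
qed

lemma dI_Er_le_dI_subspaces:
  fixes U V A B :: "(nat \<Rightarrow> 'a::{field,finite}) set"
  assumes U: "U \<in> Er n r" and V: "V \<in> Er n r" and A: "A \<in> Er n k" and B: "B \<in> Er n k"
    and "A \<subseteq> U" "B \<subseteq> V"
  shows "dI U V \<le> (r - k) + dI A B"
proof -
  note U' = Er_D[OF U] and V' = Er_D[OF V] and A' = Er_D[OF A]
  have "k \<le> r" using dim_subset_finite[OF U'(1,2) \<open>A \<subseteq> U\<close>] U' A' by simp
  moreover have "fv.dim (A \<inter> B) \<le> fv.dim (U \<inter> V)"
    using U' V' \<open>A \<subseteq> U\<close> \<open>B \<subseteq> V\<close> by (intro dim_subset_finite) (auto intro: fv.subspace_inter)
  ultimately show ?thesis using dI_Er[OF U V] dI_Er[OF A B] dim_inter_Er_le[OF A] by linarith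
qed

lemma Er_obtain_close_in_smaller_ambient:
  fixes U :: "(nat \<Rightarrow> 'a::{field,finite}) set"
  assumes U: "U \<in> Er N r" and "r \<le> M" "M \<le> N"
  obtains W where "W \<in> Er M r" "dI U W \<le> N - M"
proof -
  let ?S = "ambient M :: (nat \<Rightarrow> 'a) set"
  note U' = Er_D[OF U]
  have "U + ?S \<subseteq> ambient N" using set_plus_ambient[OF U'(3)] ambient_mono[OF \<open>M \<le> N\<close>] by blast
  then have "fv.dim (U + ?S) \<le> N"
    using dim_subset_finite[OF subspace_ambient finite_ambient] dim_ambient[of N, where 'a='a] by metis
  then have lower: "r - (N - M) \<le> fv.dim (U \<inter> ?S)"
    using dim_set_plus_inter[OF U'(1,2) subspace_ambient finite_ambient, of M] U'(4)
      dim_ambient[of M, where 'a='a] \<open>M \<le> N\<close>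
    by linarith
  have "fv.subspace (U \<inter> ?S)" using U'(1) subspace_ambient by (rule fv.subspace_inter)
  moreover have "r \<le> fv.dim ?S" using \<open>r \<le> M\<close> by (simp add: dim_ambient)
  ultimately obtain W where W: "fv.subspace W" "U \<inter> ?S \<subseteq> W" "W \<subseteq> ?S" "fv.dim W = r"
    using subspace_between[OF _ subspace_ambient finite_ambient inf_le2 dim_inter_Er_le[OF U]] by blast
  then have W_Er: "W \<in> Er M r" "W \<in> Er N r" using ambient_mono[OF \<open>M \<le> N\<close>] by (auto simp: Er_def)
  have "fv.dim (U \<inter> ?S) \<le> fv.dim (U \<inter> W)"
    using W U' by (intro dim_subset_finite) (auto intro: fv.subspace_inter)
  then have "dI U W \<le> N - M" using dI_Er[OF U W_Er(2)] lower by linarith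
  with W_Er(1) show ?thesis by (rule that)
qed

definition covers :: "nat \<Rightarrow> nat \<Rightarrow> (nat \<Rightarrow> 'a::{field,finite}) set set \<Rightarrow> nat \<Rightarrow> bool" where
  "covers n r C \<rho> \<longleftrightarrow> (\<forall>U\<in>Er n r. \<exists>D\<in>C. dI U D \<le> \<rho>)"

lemma cov_radius_le_iff_covers:
  fixes C :: "(nat \<Rightarrow> 'a::{field,finite}) set set"
  assumes "r \<le> n" "C \<subseteq> Er n r" "C \<noteq> {}"
  shows "cov_radius n r C \<le> \<rho> \<longleftrightarrow> covers n r C \<rho>"
proof -
  have "finite C" using assms(2) finite_Er finite_subset by blast
  then have "Min ((\<lambda>D. dI U D) ` C) \<le> \<rho> \<longleftrightarrow> (\<exists>D\<in>C. dI U D \<le> \<rho>)" for U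
    using assms(3) by (simp add: Min_le_iff)
  moreover have "Er n r \<noteq> ({} :: (nat \<Rightarrow> 'a) set set)" using ambient_in_Er[OF assms(1)] by blast
  ultimately show ?thesis
    unfolding cov_radius_def covers_def by (simp add: Max_le_iff finite_Er)
qed

lemma KC_le_card:
  fixes C :: "(nat \<Rightarrow> 'a::{field,finite}) set set"
  assumes "r \<le> n" "C \<subseteq> Er n r" "C \<noteq> {}" "covers n r C \<rho>"
  shows "KC TYPE('a) n r \<rho> \<le> card C"
proof -
  have "cov_radius n r C \<le> \<rho>" using cov_radius_le_iff_covers[OF assms(1-3)] assms(4) ..
  then show ?thesis unfolding KC_def using assms(2,3) by (intro Least_le) blast
qed

lemma covers_Er_self: "covers n r (Er n r) \<rho>"
  unfolding covers_def
proof
  fix U :: "(nat \<Rightarrow> 'a) set" assume "U \<in> Er n r"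
  with dI_Er_self[OF this] show "\<exists>D\<in>Er n r. dI U D \<le> \<rho>" by (intro bexI[of _ U]) simp_all
qed

lemma KC_obtain_optimal_code:
  assumes "r \<le> n"
  obtains C :: "(nat \<Rightarrow> 'a::{field,finite}) set set"
  where "C \<subseteq> Er n r" "C \<noteq> {}" "card C = KC TYPE('a) n r \<rho>" "covers n r C \<rho>"
proof -
  let ?P = "\<lambda>k. \<exists>C::(nat \<Rightarrow> 'a) set set. C \<subseteq> Er n r \<and> C \<noteq> {} \<and> card C = k
      \<and> cov_radius n r C \<le> \<rho>"
  have ne: "Er n r \<noteq> ({} :: (nat \<Rightarrow> 'a) set set)" using ambient_in_Er[OF assms] by blast
  have "cov_radius n r (Er n r :: (nat \<Rightarrow> 'a) set set) \<le> \<rho>"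
    using cov_radius_le_iff_covers[OF assms order_refl ne] covers_Er_self by blast
  then have "?P (card (Er n r :: (nat \<Rightarrow> 'a) set set))" using ne by blast
  then have "?P (KC TYPE('a) n r \<rho>)" unfolding KC_def by (rule LeastI)
  then obtain C :: "(nat \<Rightarrow> 'a) set set" where
    C: "C \<subseteq> Er n r" "C \<noteq> {}" "card C = KC TYPE('a) n r \<rho>" "cov_radius n r C \<le> \<rho>"
    by blast
  have "covers n r C \<rho>" using cov_radius_le_iff_covers[OF assms C(1,2)] C(4) by blast
  with C(1-3) show ?thesis by (rule that)
qed

lemma covers_larger_ambient:
  fixes C :: "(nat \<Rightarrow> 'a::{field,finite}) set set"
  assumes "r \<le> M" "M \<le> N" "C \<subseteq> Er M r" "covers M r C \<rho>"
  shows "covers N r C (\<rho> + (N - M))"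
  unfolding covers_def
proof
  fix U :: "(nat \<Rightarrow> 'a) set" assume U: "U \<in> Er N r"
  obtain W where W: "W \<in> Er M r" "dI U W \<le> N - M"
    using Er_obtain_close_in_smaller_ambient[OF U assms(1,2)] .
  obtain D where D: "D \<in> C" "dI W D \<le> \<rho>" using assms(4) W(1) by (auto simp: covers_def)
  have "W \<in> Er N r" "D \<in> Er N r" using W(1) D(1) assms(3) Er_mono[OF assms(2)] by blast+
  from dI_Er_triangle[OF U this] have "dI U D \<le> \<rho> + (N - M)" using W(2) D(2) by linarith
  with D(1) show "\<exists>D\<in>C. dI U D \<le> \<rho> + (N - M)" by blast
qed

lemma covers_superspaces:
  fixes C :: "(nat \<Rightarrow> 'a::{field,finite}) set set"
  assumes "k \<le> r" "r \<le> n" "C \<subseteq> Er n k" "C \<noteq> {}" "covers n k C \<rho>"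
  obtains C' :: "(nat \<Rightarrow> 'a) set set"
  where "C' \<subseteq> Er n r" "C' \<noteq> {}" "card C' \<le> card C" "covers n r C' (\<rho> + (r - k))"
proof -
  define sup :: "(nat \<Rightarrow> 'a) set \<Rightarrow> (nat \<Rightarrow> 'a) set"
    where "sup A = (SOME W. W \<in> Er n r \<and> A \<subseteq> W)" for A
  have sup: "sup A \<in> Er n r \<and> A \<subseteq> sup A" if A: "A \<in> Er n k" for A
  proof -
    obtain W where "W \<in> Er n r" "A \<subseteq> W" using Er_obtain_superspace[OF A assms(1,2)] .
    then show ?thesis unfolding sup_def by (intro someI[where P = "\<lambda>W. W \<in> Er n r \<and> A \<subseteq> W"]) blast
  qed
  have "covers n r (sup ` C) (\<rho> + (r - k))"
    unfolding covers_def
  proof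
    fix U :: "(nat \<Rightarrow> 'a) set" assume U: "U \<in> Er n r"
    obtain A where A: "A \<in> Er n k" "A \<subseteq> U" using Er_obtain_subspace[OF U assms(1)] .
    obtain D where D: "D \<in> C" "dI A D \<le> \<rho>" using assms(5) A(1) by (auto simp: covers_def)
    then have D_Er: "D \<in> Er n k" using assms(3) by blast
    have "dI U (sup D) \<le> (r - k) + dI A D"
      using sup[OF D_Er] by (intro dI_Er_le_dI_subspaces[OF U _ A(1) D_Er A(2)]) simp_all
    then show "\<exists>D'\<in>sup ` C. dI U D' \<le> \<rho> + (r - k)" using D by (intro bexI[of _ "sup D"]) auto
  qed
  moreover have "finite C" using assms(3) finite_Er finite_subset by blast
  ultimately show ?thesis using that[of "sup ` C"] sup assms(3,4) card_image_le by blast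
qed

lemma KC_larger_ambient_le:
  assumes "r \<le> M" "M \<le> N"
  shows "KC TYPE('a::{field,finite}) N r (\<rho> + (N - M)) \<le> KC TYPE('a) M r \<rho>"
proof -
  obtain C :: "(nat \<Rightarrow> 'a) set set"
    where C: "C \<subseteq> Er M r" "C \<noteq> {}" "card C = KC TYPE('a) M r \<rho>" "covers M r C \<rho>"
    by (rule KC_obtain_optimal_code[OF assms(1)])
  have "C \<subseteq> Er N r" using C(1) Er_mono[OF assms(2)] by blast
  from KC_le_card[OF order.trans[OF assms] this C(2) covers_larger_ambient[OF assms C(1,4)]]
  show ?thesis using C(3) by simp
qed

lemma KC_larger_dim_le:
  assumes "k \<le> r" "r \<le> n"
  shows "KC TYPE('a::{field,finite}) n r (\<rho> + (r - k)) \<le> KC TYPE('a) n k \<rho>"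
proof -
  obtain C :: "(nat \<Rightarrow> 'a) set set"
    where C: "C \<subseteq> Er n k" "C \<noteq> {}" "card C = KC TYPE('a) n k \<rho>" "covers n k C \<rho>"
    by (rule KC_obtain_optimal_code[OF order.trans[OF assms]])
  obtain C' :: "(nat \<Rightarrow> 'a) set set"
    where C': "C' \<subseteq> Er n r" "C' \<noteq> {}" "card C' \<le> card C" "covers n r C' (\<rho> + (r - k))"
    by (rule covers_superspaces[OF assms C(1,2,4)])
  from KC_le_card[OF assms(2) C'(1,2,4)] show ?thesis using C'(3) C(3) by simp
qed

lemma KC_le_card_Er_smaller_ambient:
  assumes "r \<le> M" "M \<le> N"
  shows "KC TYPE('a::{field,finite}) N r (N - M) \<le> card (Er M r :: (nat \<Rightarrow> 'a) set set)"
proof -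
  have cov: "covers N r (Er M r :: (nat \<Rightarrow> 'a) set set) (N - M)"
    using covers_larger_ambient[OF assms order_refl covers_Er_self[of M r 0]] by simp
  have "(Er M r :: (nat \<Rightarrow> 'a) set set) \<noteq> {}" using ambient_in_Er[OF assms(1)] by blast
  from KC_le_card[OF order.trans[OF assms] Er_mono[OF assms(2)] this cov] show ?thesis .
qed

lemma KC_le_card_Er_smaller_dim:
  assumes "k \<le> r" "r \<le> n"
  shows "KC TYPE('a::{field,finite}) n r (r - k) \<le> card (Er n k :: (nat \<Rightarrow> 'a) set set)"
proof -
  have "(Er n k :: (nat \<Rightarrow> 'a) set set) \<noteq> {}" using ambient_in_Er[OF order.trans[OF assms]] by blast
  then obtain C' :: "(nat \<Rightarrow> 'a) set set" where
    C': "C' \<subseteq> Er n r" "C' \<noteq> {}" "card C' \<le> card (Er n k :: (nat \<Rightarrow> 'a) set set)"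
      "covers n r C' (0 + (r - k))"
    by (rule covers_superspaces[OF assms order_refl _ covers_Er_self])
  from KC_le_card[OF assms(2) C'(1,2,4)] show ?thesis using C'(3) by simp
qed

theorem lemma8:
  fixes n r \<rho> :: nat
  assumes "r \<le> n div 2" and "0 < \<rho>" and "\<rho> < r"
  shows "KC TYPE('a::{field,finite}) n r \<rho> \<le> KC TYPE('a) (n - 1) r (\<rho> - 1)
       \<and> real (KC TYPE('a) (n - 1) r (\<rho> - 1)) \<le> gauss_binom (card (UNIV :: 'a set)) (n - \<rho>) r
       \<and> KC TYPE('a) n r \<rho> \<le> KC TYPE('a) n (r - 1) (\<rho> - 1)
       \<and> real (KC TYPE('a) n (r - 1) (\<rho> - 1)) \<le> gauss_binom (card (UNIV :: 'a set)) n (r - \<rho>)"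
proof (intro conjI)
  have "r \<le> n - \<rho>" using assms by linarith
  show "KC TYPE('a) n r \<rho> \<le> KC TYPE('a) (n - 1) r (\<rho> - 1)"
    using KC_larger_ambient_le[of r "n - 1" n "\<rho> - 1", where 'a='a] assms by simp
  have "KC TYPE('a) (n - 1) r (\<rho> - 1) \<le> card (Er (n - \<rho>) r :: (nat \<Rightarrow> 'a) set set)"
    using KC_le_card_Er_smaller_ambient[OF \<open>r \<le> n - \<rho>\<close>, of "n - 1", where 'a='a] assms by simp
  then show "real (KC TYPE('a) (n - 1) r (\<rho> - 1)) \<le> gauss_binom (card (UNIV :: 'a set)) (n - \<rho>) r"
    using card_Er_le_gauss_binom[OF \<open>r \<le> n - \<rho>\<close>, where 'a='a] by linarith
  show "KC TYPE('a) n r \<rho> \<le> KC TYPE('a) n (r - 1) (\<rho> - 1)"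
    using KC_larger_dim_le[of "r - 1" r n "\<rho> - 1", where 'a='a] assms by simp
  have "KC TYPE('a) n (r - 1) (\<rho> - 1) \<le> card (Er n (r - \<rho>) :: (nat \<Rightarrow> 'a) set set)"
    using KC_le_card_Er_smaller_dim[of "r - \<rho>" "r - 1" n, where 'a='a] assms by simp
  then show "real (KC TYPE('a) n (r - 1) (\<rho> - 1)) \<le> gauss_binom (card (UNIV :: 'a set)) n (r - \<rho>)"
    using card_Er_le_gauss_binom[of "r - \<rho>" n, where 'a='a] assms by linarith
qed

end
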